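(* Let $(R,\alpha)$ be a multiplicative Hom-Lie conformal algebra with $\alpha$ surjective and $Z(R)=0$. Then $\mathrm{QC}(R)$ is a Hom-Lie conformal algebra (with the bracket $[D_\mu H]_\theta(a)=D_\mu(H_{\theta-\mu}a)-H_{\theta-\mu}(D_\mu a)$, in particular closed under it: $[\mathrm{QC}_{\alpha^k}(R)_\mu\mathrm{QC}_{\alpha^s}(R)]\subseteq\mathrm{QC}_{\alpha^{k+s}}(R)[\mu]$) if and only if $[\mathrm{QC}(R)_\lambda\mathrm{QC}(R)]=0$.
   Context: Hom-Lie conformal algebra $(R,\alpha)$: $\mathbb{C}[\partial]$-module $R$, $\mathbb{C}$-linear $\alpha$ with $\alpha\partial=\partial\alpha$, bilinear $\lambda$-bracket $R\otimes R\to R[\lambda]$ with $[\partial a_\lambda b]=-\lambda[a_\lambda b]$, $[a_\lambda\partial b]=(\partial+\lambda)[a_\lambda b]$, $[a_\lambda b]=-[b_{-\partial-\lambda}a]$, $[\alpha(a)_\lambda[b_\mu c]]=[[a_\lambda b]_{\lambda+\mu}\alpha(c)]+[\alpha(b)_\mu[a_\lambda c]]$; multiplicative: $\alpha([a_\lambda b])=[\alpha(a)_\lambda\alpha(b)]$. Center $Z(R)=\{a:[a_\lambda b]=0\ \forall b\}$. $\mathrm{Cend}(R)$ is the set of $\mathbb{C}$-linear $D:R\to R[\mu]$ with $D_\mu(\partial a)=(\partial+\mu)D_\mu(a)$, and $\Omega=\{D\in\mathrm{Cend}(R): D_\mu\alpha=\alpha D_\mu\}$. $D\in\Omega$ is an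 $\alpha^k$-quasicentroid if $[(D_\mu a)_{\lambda+\mu}\alpha^k(b)]=[\alpha^k(a)_\lambda D_\mu(b)]$ for all $a,b\in R$; $\mathrm{QC}_{\alpha^k}(R)$ is the set of these and $\mathrm{QC}(R)=\bigoplus_{k\ge0}\mathrm{QC}_{\alpha^k}(R)$. *)

theory Defs
  imports Complex_Main "HOL-Library.Function_Algebras"
begin

text \<open>A C[d]-module is a type 'v with addition, a complex scalar
action sc and a C-linear operator d (the action of the indeterminate).
A lambda-bracket with values in R[lambda] is represented pointwise as a function
br :: complex => 'v => 'v => 'v (br l a b = [a_l b]) which is required to be
polynomial in l.  Everything is stated relative to a carrier set A, so that the
same definition applies both to R (carrier UNIV) and to QC(R).\<close>

definition is_cpoly_on :: "'v set \<Rightarrow> (complex \<Rightarrow> 'v \<Rightarrow> 'v) \<Rightarrow> (complex \<Rightarrow> 'v::ab_group_add) \<Rightarrow> bool" where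
  "is_cpoly_on A sc f \<longleftrightarrow>
     (\<exists>n c. (\<forall>j<n. c j \<in> A) \<and> (\<forall>z. f z = (\<Sum>j<n. sc (z ^ j) (c j))))"

text \<open>[b_{-d-l} a] for [b_l a] = sum_j l^j c_j is  sum_j (-d-l)^j c_j
  = sum_j (-1)^j sum_{i<=j} binom(j,i) l^i d^(j-i) c_j.\<close>
definition subst_minus_d :: "(complex \<Rightarrow> 'v \<Rightarrow> 'v) \<Rightarrow> ('v \<Rightarrow> 'v) \<Rightarrow> nat \<Rightarrow> (nat \<Rightarrow> 'v) \<Rightarrow> complex \<Rightarrow> 'v::ab_group_add" where
  "subst_minus_d sc d n c l =
     (\<Sum>j<n. \<Sum>i\<le>j. sc ((-1) ^ j * of_nat (j choose i) * l ^ i) ((d ^^ (j - i)) (c j)))"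

definition hom_lie_conf_on ::
  "'v set \<Rightarrow> (complex \<Rightarrow> 'v \<Rightarrow> 'v) \<Rightarrow> ('v \<Rightarrow> 'v) \<Rightarrow> ('v \<Rightarrow> 'v) \<Rightarrow> (complex \<Rightarrow> 'v \<Rightarrow> 'v \<Rightarrow> 'v::ab_group_add) \<Rightarrow> bool" where
  "hom_lie_conf_on A sc d alpha br \<longleftrightarrow>
     \<comment> \<open>A is a C[d]-submodule (closed under the operations), alpha and br preserve A\<close>
     0 \<in> A \<and>
     (\<forall>a\<in>A. \<forall>b\<in>A. a + b \<in> A) \<and>
     (\<forall>x. \<forall>a\<in>A. sc x a \<in> A) \<and>
     (\<forall>a\<in>A. d a \<in> A) \<and>
     (\<forall>a\<in>A. alpha a \<in> A) \<and>
     (\<forall>l. \<forall>a\<in>A. \<forall>b\<in>A. br l a b \<in> A) \<and>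
     \<comment> \<open>complex vector space axioms\<close>
     (\<forall>a\<in>A. sc 1 a = a) \<and>
     (\<forall>x y. \<forall>a\<in>A. sc (x * y) a = sc x (sc y a)) \<and>
     (\<forall>x y. \<forall>a\<in>A. sc (x + y) a = sc x a + sc y a) \<and>
     (\<forall>x. \<forall>a\<in>A. \<forall>b\<in>A. sc x (a + b) = sc x a + sc x b) \<and>
     \<comment> \<open>d and alpha are C-linear, alpha commutes with d\<close>
     (\<forall>a\<in>A. \<forall>b\<in>A. d (a + b) = d a + d b) \<and>
     (\<forall>x. \<forall>a\<in>A. d (sc x a) = sc x (d a)) \<and>
     (\<forall>a\<in>A. \<forall>b\<in>A. alpha (a + b) = alpha a + alpha b) \<and>
     (\<forall>x. \<forall>a\<in>A. alpha (sc x a) = sc x (alpha a)) \<and>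
     (\<forall>a\<in>A. alpha (d a) = d (alpha a)) \<and>
     \<comment> \<open>the bracket is C-bilinear and takes values in A[l]\<close>
     (\<forall>l. \<forall>a\<in>A. \<forall>b\<in>A. \<forall>c\<in>A. br l (a + b) c = br l a c + br l b c) \<and>
     (\<forall>l. \<forall>a\<in>A. \<forall>b\<in>A. \<forall>c\<in>A. br l a (b + c) = br l a b + br l a c) \<and>
     (\<forall>l x. \<forall>a\<in>A. \<forall>b\<in>A. br l (sc x a) b = sc x (br l a b)) \<and>
     (\<forall>l x. \<forall>a\<in>A. \<forall>b\<in>A. br l a (sc x b) = sc x (br l a b)) \<and>
     (\<forall>a\<in>A. \<forall>b\<in>A. is_cpoly_on A sc (\<lambda>l. br l a b)) \<and>
     \<comment> \<open>conformal sesquilinearity\<close>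
     (\<forall>l. \<forall>a\<in>A. \<forall>b\<in>A. br l (d a) b = sc (- l) (br l a b)) \<and>
     (\<forall>l. \<forall>a\<in>A. \<forall>b\<in>A. br l a (d b) = d (br l a b) + sc l (br l a b)) \<and>
     \<comment> \<open>skew-symmetry [a_l b] = - [b_{-d-l} a]\<close>
     (\<forall>a\<in>A. \<forall>b\<in>A. \<exists>n c. (\<forall>j<n. c j \<in> A) \<and>
        (\<forall>l. br l b a = (\<Sum>j<n. sc (l ^ j) (c j))) \<and>
        (\<forall>l. br l a b = - subst_minus_d sc d n c l)) \<and>
     \<comment> \<open>Hom-Jacobi identity\<close>
     (\<forall>l m. \<forall>a\<in>A. \<forall>b\<in>A. \<forall>c\<in>A.
        br l (alpha a) (br m b c) = br (l + m) (br l a b) (alpha c) + br m (alpha b) (br l a c))"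

definition multiplicative :: "('v \<Rightarrow> 'v) \<Rightarrow> (complex \<Rightarrow> 'v \<Rightarrow> 'v \<Rightarrow> 'v) \<Rightarrow> bool" where
  "multiplicative alpha br \<longleftrightarrow> (\<forall>l a b. alpha (br l a b) = br l (alpha a) (alpha b))"

definition center :: "(complex \<Rightarrow> 'v \<Rightarrow> 'v \<Rightarrow> 'v::zero) \<Rightarrow> 'v set" where
  "center br = {a. \<forall>b l. br l a b = 0}"

text \<open>Conformal endomorphisms D : R -> R[m], represented pointwise (D m a = D_m(a)).\<close>
definition Cend :: "(complex \<Rightarrow> 'v \<Rightarrow> 'v) \<Rightarrow> ('v \<Rightarrow> 'v) \<Rightarrow> (complex \<Rightarrow> 'v \<Rightarrow> 'v::ab_group_add) set" where
  "Cend sc d = {D.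
     (\<forall>m a b. D m (a + b) = D m a + D m b) \<and>
     (\<forall>m x a. D m (sc x a) = sc x (D m a)) \<and>
     (\<forall>a. is_cpoly_on UNIV sc (\<lambda>m. D m a)) \<and>
     (\<forall>m a. D m (d a) = d (D m a) + sc m (D m a))}"

definition Omega :: "(complex \<Rightarrow> 'v \<Rightarrow> 'v) \<Rightarrow> ('v \<Rightarrow> 'v) \<Rightarrow> ('v \<Rightarrow> 'v) \<Rightarrow> (complex \<Rightarrow> 'v \<Rightarrow> 'v::ab_group_add) set" where
  "Omega sc d alpha = {D \<in> Cend sc d. \<forall>m a. D m (alpha a) = alpha (D m a)}"

definition QCk :: "(complex \<Rightarrow> 'v \<Rightarrow> 'v) \<Rightarrow> ('v \<Rightarrow> 'v) \<Rightarrow> ('v \<Rightarrow> 'v) \<Rightarrow> (complex \<Rightarrow> 'v \<Rightarrow> 'v \<Rightarrow> 'v) \<Rightarrow> nat \<Rightarrow> (complex \<Rightarrow> 'v \<Rightarrow> 'v::ab_group_add) set" where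
  "QCk sc d alpha br k = {D \<in> Omega sc d alpha.
     \<forall>a b l m. br (l + m) (D m a) ((alpha ^^ k) b) = br l ((alpha ^^ k) a) (D m b)}"

text \<open>QC(R) = sum over k of QC_{alpha^k}(R), as the set of finite sums of homogeneous elements.\<close>
definition QC :: "(complex \<Rightarrow> 'v \<Rightarrow> 'v) \<Rightarrow> ('v \<Rightarrow> 'v) \<Rightarrow> ('v \<Rightarrow> 'v) \<Rightarrow> (complex \<Rightarrow> 'v \<Rightarrow> 'v \<Rightarrow> 'v) \<Rightarrow> (complex \<Rightarrow> 'v \<Rightarrow> 'v::ab_group_add) set" where
  "QC sc d alpha br = {(\<Sum>k<n. f k) | n f. \<forall>k<n. f k \<in> QCk sc d alpha br k}"

definition cend_sc :: "(complex \<Rightarrow> 'v \<Rightarrow> 'v) \<Rightarrow> complex \<Rightarrow> (complex \<Rightarrow> 'v \<Rightarrow> 'v) \<Rightarrow> (complex \<Rightarrow> 'v \<Rightarrow> 'v)" where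
  "cend_sc sc x D = (\<lambda>m a. sc x (D m a))"

definition cend_d :: "(complex \<Rightarrow> 'v \<Rightarrow> 'v) \<Rightarrow> (complex \<Rightarrow> 'v \<Rightarrow> 'v) \<Rightarrow> (complex \<Rightarrow> 'v \<Rightarrow> 'v)" where
  "cend_d sc D = (\<lambda>m a. sc (- m) (D m a))"

definition cend_alpha :: "('v \<Rightarrow> 'v) \<Rightarrow> (complex \<Rightarrow> 'v \<Rightarrow> 'v) \<Rightarrow> (complex \<Rightarrow> 'v \<Rightarrow> 'v)" where
  "cend_alpha alpha D = (\<lambda>m a. alpha (D m a))"

definition cend_br :: "complex \<Rightarrow> (complex \<Rightarrow> 'v \<Rightarrow> 'v) \<Rightarrow> (complex \<Rightarrow> 'v \<Rightarrow> 'v) \<Rightarrow> (complex \<Rightarrow> 'v \<Rightarrow> 'v::ab_group_add)" where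
  "cend_br m D H = (\<lambda>t a. D m (H (t - m) a) - H (t - m) (D m a))"

end

theory Submission imports Defs begin

text \<open>Let \<open>D\<close> be an \<open>\<alpha>^k\<close>- and \<open>H\<close> an \<open>\<alpha>^s\<close>-quasicentroid. Moving first \<open>D\<close> and then \<open>H\<close>
  across the bracket gives
  \<open>[(D_\<mu> H_\<nu> a)_{\<lambda>+\<mu>+\<nu>} \<alpha>^{k+s} b] = [\<alpha>^{k+s} a _\<lambda> H_\<nu> D_\<mu> b]\<close>,
  and symmetrically with \<open>D\<close> and \<open>H\<close> exchanged, so \<open>X = [D_\<mu> H]_\<theta>\<close> satisfies the
  \<open>\<alpha>^{k+s}\<close>-quasicentroid identity up to a sign. If \<open>X\<close> is an \<open>\<alpha>^{k+s}\<close>-quasicentroid, both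
  sides of that identity therefore vanish; since \<open>\<alpha>\<close> is surjective, every \<open>X a\<close> is central,
  hence zero. Conversely, if the brackets of homogeneous quasicentroids vanish, bilinearity
  makes the bracket on all of \<open>QC(R)\<close> zero, and the Hom-Lie conformal axioms hold trivially.\<close>

lemma additive_fun_apply: "additive (\<lambda>P::'a \<Rightarrow> 'b \<Rightarrow> 'c::ab_group_add. P x y)"
  by (simp add: additive_def)

locale hom_bracket_module =
  fixes sc :: "complex \<Rightarrow> 'r::ab_group_add \<Rightarrow> 'r"
    and d alpha :: "'r \<Rightarrow> 'r"
    and br :: "complex \<Rightarrow> 'r \<Rightarrow> 'r \<Rightarrow> 'r"
  assumes sc_one: "sc 1 a = a"
    and sc_mult: "sc (x * y) a = sc x (sc y a)"
    and sc_add_left: "sc (x + y) a = sc x a + sc y a"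
    and sc_add_right: "sc x (a + b) = sc x a + sc x b"
    and d_add: "d (a + b) = d a + d b"
    and d_sc: "d (sc x a) = sc x (d a)"
    and alpha_add: "alpha (a + b) = alpha a + alpha b"
    and alpha_sc: "alpha (sc x a) = sc x (alpha a)"
    and alpha_d: "alpha (d a) = d (alpha a)"
    and br_add_left: "br l (a + b) c = br l a c + br l b c"
    and br_add_right: "br l a (b + c) = br l a b + br l a c"
    and br_sc_left: "br l (sc x a) b = sc x (br l a b)"
    and br_sc_right: "br l a (sc x b) = sc x (br l a b)"
    and alpha_br: "alpha (br l a b) = br l (alpha a) (alpha b)"

lemma hom_bracket_module_if_multiplicative:
  assumes "hom_lie_conf_on UNIV sc d alpha br" and "multiplicative alpha br"
  shows "hom_bracket_module sc d alpha br"
  using assms unfolding hom_lie_conf_on_def multiplicative_def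
  by unfold_locales simp_all

context hom_bracket_module
begin

lemma additive_sc: "additive (sc x)"
  by (simp add: additive_def sc_add_right)

lemma additive_alpha: "additive alpha"
  by (simp add: additive_def alpha_add)

lemma additive_br_left: "additive (\<lambda>a. br l a c)"
  by (simp add: additive_def br_add_left)

lemma additive_br_right: "additive (br l a)"
  by (simp add: additive_def br_add_right)

lemma additive_d: "additive d"
  by (simp add: additive_def d_add)

lemma sc_zero [simp]: "sc x 0 = 0"
  by (rule additive.zero[OF additive_sc])

lemma d_zero [simp]: "d 0 = 0"
  by (rule additive.zero[OF additive_d])

lemma alpha_zero [simp]: "alpha 0 = 0"
  by (rule additive.zero[OF additive_alpha])

lemma br_zero_left [simp]: "br l 0 c = 0"
  by (rule additive.zero[OF additive_br_left])

lemma br_zero_right [simp]: "br l a 0 = 0"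
  by (rule additive.zero[OF additive_br_right])

lemma sc_commute: "sc x (sc y a) = sc y (sc x a)"
  by (metis mult.commute sc_mult)

lemma eq_neg_self_imp_zero:
  assumes "(a::'r) = - a"
  shows "a = 0"
proof -
  have "sc 2 a = a + a"
    using sc_add_left[of 1 1 a] by (simp add: sc_one)
  also have "\<dots> = 0"
    using assms by (metis add.right_inverse)
  finally have "sc (1/2) (sc 2 a) = 0"
    by simp
  then show ?thesis
    by (simp add: sc_one flip: sc_mult)
qed

subsection \<open>Polynomials in the spectral parameter\<close>

lemma sum_sc_powers_pad:
  assumes "n \<le> N"
  shows "(\<Sum>j<n. sc (z ^ j) (c j)) = (\<Sum>j<N. sc (z ^ j) (if j < n then c j else 0))"
proof -
  have "(\<Sum>j<N. sc (z ^ j) (if j < n then c j else 0)) = (\<Sum>j<n. sc (z ^ j) (if j < n then c j else 0))"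
    by (rule sum.mono_neutral_right) (use assms in auto)
  then show ?thesis by simp
qed

lemma is_cpoly_on_add:
  assumes "is_cpoly_on UNIV sc f" and "is_cpoly_on UNIV sc g"
  shows "is_cpoly_on UNIV sc (\<lambda>z. f z + g z)"
proof -
  obtain n1 c1 where f: "\<forall>z. f z = (\<Sum>j<n1. sc (z ^ j) (c1 j))"
    using assms(1) by (auto simp: is_cpoly_on_def)
  obtain n2 c2 where g: "\<forall>z. g z = (\<Sum>j<n2. sc (z ^ j) (c2 j))"
    using assms(2) by (auto simp: is_cpoly_on_def)
  define c where "c j = (if j < n1 then c1 j else 0) + (if j < n2 then c2 j else 0)" for j
  have "f z + g z = (\<Sum>j<max n1 n2. sc (z ^ j) (c j))" for z
    using f g sum_sc_powers_pad[of n1 "max n1 n2" z c1] sum_sc_powers_pad[of n2 "max n1 n2" z c2]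
    by (simp add: c_def sc_add_right sum.distrib)
  then show ?thesis
    unfolding is_cpoly_on_def by (intro exI[of _ "max n1 n2"] exI[of _ c]) simp
qed

lemma is_cpoly_on_linear_image:
  assumes "is_cpoly_on UNIV sc f" and "additive g" and "\<And>x a. g (sc x a) = sc x (g a)"
  shows "is_cpoly_on UNIV sc (\<lambda>z. g (f z))"
proof -
  obtain n c where "\<forall>z. f z = (\<Sum>j<n. sc (z ^ j) (c j))"
    using assms(1) by (auto simp: is_cpoly_on_def)
  then have "g (f z) = (\<Sum>j<n. sc (z ^ j) (g (c j)))" for z
    by (simp add: additive.sum[OF assms(2)] assms(3))
  then show ?thesis
    unfolding is_cpoly_on_def by (intro exI[of _ n] exI[of _ "\<lambda>j. g (c j)"]) simp
qed

lemma is_cpoly_on_scale_neg: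
  assumes "is_cpoly_on UNIV sc f"
  shows "is_cpoly_on UNIV sc (\<lambda>z. sc (- z) (f z))"
proof -
  obtain n c where f: "\<forall>z. f z = (\<Sum>j<n. sc (z ^ j) (c j))"
    using assms by (auto simp: is_cpoly_on_def)
  define c' where "c' j = (if j = 0 then 0 else sc (- 1) (c (j - 1)))" for j
  have "sc (- z) (f z) = (\<Sum>j<Suc n. sc (z ^ j) (c' j))" for z
  proof -
    have "sc (- z) (f z) = (\<Sum>j<n. sc (z ^ Suc j) (sc (- 1) (c j)))"
      using f by (simp add: additive.sum[OF additive_sc] flip: sc_mult)
    then show ?thesis
      by (subst sum.lessThan_Suc_shift) (simp add: c'_def)
  qed
  then show ?thesis
    unfolding is_cpoly_on_def by (intro exI[of _ "Suc n"] exI[of _ c']) simp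
qed

abbreviation (input) QCk_R :: "nat \<Rightarrow> (complex \<Rightarrow> 'r \<Rightarrow> 'r) set" where
  "QCk_R \<equiv> QCk sc d alpha br"

lemma QCk_quasicentroid:
  "D \<in> QCk_R k \<Longrightarrow> br (l + m) (D m a) ((alpha ^^ k) b) = br l ((alpha ^^ k) a) (D m b)"
  by (simp add: QCk_def)

lemma QCk_additive: "D \<in> QCk_R k \<Longrightarrow> additive (D m)"
  by (simp add: QCk_def Omega_def Cend_def additive_def)

lemma QCk_funpow_commute: "D \<in> QCk_R k \<Longrightarrow> D m ((alpha ^^ j) a) = (alpha ^^ j) (D m a)"
  by (induction j) (auto simp: QCk_def Omega_def)

lemma QCk_zero: "0 \<in> QCk_R k"
  unfolding QCk_def Omega_def Cend_def is_cpoly_on_def by (auto intro: exI[of _ 0])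

lemma QCk_add:
  assumes "D \<in> QCk_R k" and "H \<in> QCk_R k"
  shows "D + H \<in> QCk_R k"
proof -
  have "is_cpoly_on UNIV sc (\<lambda>m. D m a + H m a)" for a
    using assms by (intro is_cpoly_on_add) (auto simp: QCk_def Omega_def Cend_def)
  then show ?thesis
    using assms unfolding QCk_def Omega_def Cend_def
    by (auto simp: sc_add_right d_add alpha_add br_add_left br_add_right algebra_simps)
qed

lemma QCk_cend_sc:
  assumes "D \<in> QCk_R k"
  shows "cend_sc sc x D \<in> QCk_R k"
proof -
  have "is_cpoly_on UNIV sc (\<lambda>m. sc x (D m a))" for a
    by (rule is_cpoly_on_linear_image)
      (use assms in \<open>auto simp: QCk_def Omega_def Cend_def additive_sc sc_commute\<close>)
  then show ?thesis
    using assms unfolding QCk_def Omega_def Cend_def cend_sc_def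
    by (simp add: sc_add_right d_sc alpha_sc br_sc_left br_sc_right sc_commute)
qed

lemma QCk_cend_d:
  assumes "D \<in> QCk_R k"
  shows "cend_d sc D \<in> QCk_R k"
proof -
  have "is_cpoly_on UNIV sc (\<lambda>m. sc (- m) (D m a))" for a
    using assms by (intro is_cpoly_on_scale_neg) (auto simp: QCk_def Omega_def Cend_def)
  then show ?thesis
    using assms unfolding QCk_def Omega_def Cend_def cend_d_def
    by (simp add: sc_add_right d_sc alpha_sc br_sc_left br_sc_right sc_commute)
qed

lemma QCk_cend_alpha:
  assumes "D \<in> QCk_R k"
  shows "cend_alpha alpha D \<in> QCk_R (Suc k)"
proof -
  have "is_cpoly_on UNIV sc (\<lambda>m. alpha (D m a))" for a
    by (rule is_cpoly_on_linear_image)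
      (use assms in \<open>auto simp: QCk_def Omega_def Cend_def additive_alpha alpha_sc\<close>)
  moreover have "br (l + m) (alpha (D m a)) ((alpha ^^ Suc k) b) = br l ((alpha ^^ Suc k) a) (alpha (D m b))"
    for a b l m
    by (simp add: QCk_quasicentroid[OF assms] flip: alpha_br)
  ultimately show ?thesis
    using assms unfolding QCk_def Omega_def Cend_def cend_alpha_def
    by (auto simp: alpha_add alpha_sc alpha_d)
qed

abbreviation (input) QC_R :: "(complex \<Rightarrow> 'r \<Rightarrow> 'r) set" where
  "QC_R \<equiv> QC sc d alpha br"

lemma QC_intro: "(\<And>k. k < n \<Longrightarrow> f k \<in> QCk_R k) \<Longrightarrow> (\<Sum>k<n. f k) \<in> QC_R"
  unfolding QC_def by blast

lemma QC_obtain_padded: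
  assumes "P \<in> QC_R"
  obtains f n where "\<And>k. f k \<in> QCk_R k" and "\<And>N. n \<le> N \<Longrightarrow> P = (\<Sum>k<N. f k)"
proof -
  obtain n f where P: "P = (\<Sum>k<n. f k)" and f: "\<forall>k<n. f k \<in> QCk_R k"
    using assms by (auto simp: QC_def)
  define f' where "f' k = (if k < n then f k else 0)" for k
  have f': "f' k \<in> QCk_R k" for k
    using f QCk_zero by (simp add: f'_def)
  have P': "P = (\<Sum>k<N. f' k)" if "n \<le> N" for N
  proof -
    have "(\<Sum>k<N. f' k) = (\<Sum>k<n. f' k)"
      by (rule sum.mono_neutral_right) (use that in \<open>auto simp: f'_def\<close>)
    then show ?thesis
      by (simp add: P f'_def)
  qed
  show ?thesis
    by (rule that[OF f' P'])
qed

lemma QC_obtain: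
  assumes "P \<in> QC_R"
  obtains f n where "\<And>k. f k \<in> QCk_R k" and "P = (\<Sum>k<n. f k)"
proof -
  obtain f n where "\<And>k. f k \<in> QCk_R k" and "\<And>N. n \<le> N \<Longrightarrow> P = (\<Sum>k<N. f k)"
    using QC_obtain_padded[OF assms] by metis
  then show ?thesis
    using that by blast
qed

lemma QC_zero: "0 \<in> QC_R"
  using QC_intro[of 0] by simp

lemma QC_add:
  assumes "P \<in> QC_R" and "Q \<in> QC_R"
  shows "P + Q \<in> QC_R"
proof -
  obtain f n1 where f: "\<And>k. f k \<in> QCk_R k" and P: "\<And>N. n1 \<le> N \<Longrightarrow> P = (\<Sum>k<N. f k)"
    using QC_obtain_padded[OF assms(1)] by metis
  obtain g n2 where g: "\<And>k. g k \<in> QCk_R k" and Q: "\<And>N. n2 \<le> N \<Longrightarrow> Q = (\<Sum>k<N. g k)"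
    using QC_obtain_padded[OF assms(2)] by metis
  have "P + Q = (\<Sum>k<max n1 n2. f k + g k)"
    using P[of "max n1 n2"] Q[of "max n1 n2"] by (simp add: sum.distrib)
  then show ?thesis
    using f g QCk_add QC_intro by simp
qed

lemma QC_image_shift:
  assumes "P \<in> QC_R" and "additive \<Phi>" and "\<And>k D. D \<in> QCk_R k \<Longrightarrow> \<Phi> D \<in> QCk_R (k + j)"
  shows "\<Phi> P \<in> QC_R"
proof -
  obtain f n where f: "\<And>k. f k \<in> QCk_R k" and P: "P = (\<Sum>k<n. f k)"
    using QC_obtain[OF assms(1)] by metis
  define g where "g k = (if k < j then 0 else \<Phi> (f (k - j)))" for k
  have "\<Phi> P = (\<Sum>k<n. \<Phi> (f k))"
    by (simp add: P additive.sum[OF assms(2)])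
  also have "\<dots> = (\<Sum>k<n + j. g k)"
  proof (induction n)
    case 0
    have "(\<Sum>k<j. g k) = 0"
      by (rule sum.neutral) (simp add: g_def)
    then show ?case
      by simp
  next
    case (Suc n)
    then show ?case by (simp add: g_def)
  qed
  moreover have "g k \<in> QCk_R k" for k
    using assms(3)[OF f, of "k - j"] QCk_zero by (auto simp: g_def)
  ultimately show ?thesis
    using QC_intro by simp
qed

lemma additive_cend_sc: "additive (cend_sc sc x)"
  by (simp add: additive_def cend_sc_def sc_add_right fun_eq_iff)

lemma additive_cend_d: "additive (cend_d sc)"
  by (simp add: additive_def cend_d_def sc_add_right fun_eq_iff)

lemma additive_cend_alpha: "additive (cend_alpha alpha)"
  by (simp add: additive_def cend_alpha_def alpha_add fun_eq_iff)

lemma QC_cend_sc: "P \<in> QC_R \<Longrightarrow> cend_sc sc x P \<in> QC_R"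
  by (rule QC_image_shift[of P "cend_sc sc x" 0]) (simp_all add: additive_cend_sc QCk_cend_sc)

lemma QC_cend_d: "P \<in> QC_R \<Longrightarrow> cend_d sc P \<in> QC_R"
  by (rule QC_image_shift[of P "cend_d sc" 0]) (simp_all add: additive_cend_d QCk_cend_d)

lemma QC_cend_alpha: "P \<in> QC_R \<Longrightarrow> cend_alpha alpha P \<in> QC_R"
  by (rule QC_image_shift[of P "cend_alpha alpha" 1]) (simp_all add: additive_cend_alpha QCk_cend_alpha)

lemma QC_additive:
  assumes "P \<in> QC_R"
  shows "additive (P m)"
proof
  fix a b
  obtain f n where f: "\<And>k. f k \<in> QCk_R k" and P: "P = (\<Sum>k<n. f k)"
    using QC_obtain[OF assms] by metis
  have "P m c = (\<Sum>k<n. f k m c)" for c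
    by (simp add: P additive.sum[OF additive_fun_apply])
  moreover have "f k m (a + b) = f k m a + f k m b" for k
    using QCk_additive[OF f] by (rule additive.add)
  ultimately show "P m (a + b) = P m a + P m b"
    by (simp add: sum.distrib)
qed

lemma additive_cend_br_right: "additive (D m) \<Longrightarrow> additive (cend_br m D)"
  by (simp add: additive_def cend_br_def fun_eq_iff)

lemma additive_cend_br_left: "(\<And>t. additive (Q t)) \<Longrightarrow> additive (\<lambda>D. cend_br m D Q)"
  by (simp add: additive_def cend_br_def fun_eq_iff)

lemma QC_cend_br_eq_0:
  assumes "\<And>k s D H. D \<in> QCk_R k \<Longrightarrow> H \<in> QCk_R s \<Longrightarrow> cend_br m D H = 0"
    and "P \<in> QC_R" and "Q \<in> QC_R"
  shows "cend_br m P Q = 0"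
proof -
  obtain f n1 where f: "\<And>k. f k \<in> QCk_R k" and P: "P = (\<Sum>k<n1. f k)"
    using QC_obtain[OF assms(2)] by metis
  obtain g n2 where g: "\<And>k. g k \<in> QCk_R k" and Q: "Q = (\<Sum>k<n2. g k)"
    using QC_obtain[OF assms(3)] by metis
  have "cend_br m P Q = (\<Sum>k<n1. \<Sum>j<n2. cend_br m (f k) (g j))"
    unfolding P additive.sum[OF additive_cend_br_left[OF QC_additive[OF assms(3)]]]
    unfolding Q additive.sum[OF additive_cend_br_right[OF QCk_additive[OF f]]] ..
  also have "\<dots> = 0"
    by (simp add: assms(1)[OF f g])
  finally show ?thesis .
qed

lemma cend_structure_laws:
  shows "cend_sc sc 1 P = P"
    and "cend_sc sc (x * y) P = cend_sc sc x (cend_sc sc y P)"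
    and "cend_sc sc (x + y) P = cend_sc sc x P + cend_sc sc y P"
    and "cend_sc sc x (P + Q) = cend_sc sc x P + cend_sc sc x Q"
    and "cend_d sc (P + Q) = cend_d sc P + cend_d sc Q"
    and "cend_d sc (cend_sc sc x P) = cend_sc sc x (cend_d sc P)"
    and "cend_alpha alpha (P + Q) = cend_alpha alpha P + cend_alpha alpha Q"
    and "cend_alpha alpha (cend_sc sc x P) = cend_sc sc x (cend_alpha alpha P)"
    and "cend_alpha alpha (cend_d sc P) = cend_d sc (cend_alpha alpha P)"
    and "cend_sc sc x 0 = 0"
    and "cend_d sc 0 = 0"
  by (simp_all add: fun_eq_iff cend_sc_def cend_d_def cend_alpha_def sc_one sc_mult sc_add_left
      sc_add_right alpha_add alpha_sc sc_commute)

lemma hom_lie_conf_on_QC_if_cend_br_vanishes: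
  assumes "\<And>k s D H m. D \<in> QCk_R k \<Longrightarrow> H \<in> QCk_R s \<Longrightarrow> cend_br m D H = 0"
  shows "hom_lie_conf_on QC_R (cend_sc sc) (cend_d sc) (cend_alpha alpha) cend_br"
proof -
  have br0: "P \<in> QC_R \<Longrightarrow> Q \<in> QC_R \<Longrightarrow> cend_br m P Q = 0" for m P Q
    using QC_cend_br_eq_0 assms by blast
  have cpoly0: "is_cpoly_on QC_R (cend_sc sc) (\<lambda>l. 0)"
    unfolding is_cpoly_on_def by (rule exI[of _ 0]) simp
  have skew0: "\<exists>n c. (\<forall>j<n. c j \<in> QC_R) \<and> (\<forall>l. (\<Sum>j<n. cend_sc sc (l ^ j) (c j)) = 0)
      \<and> (\<forall>l. subst_minus_d (cend_sc sc) (cend_d sc) n c l = 0)"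
    by (rule exI[of _ 0]) (simp add: subst_minus_d_def)
  show ?thesis
    unfolding hom_lie_conf_on_def
    by (intro conjI ballI allI)
      (simp_all add: br0 QC_zero QC_add QC_cend_sc QC_cend_d QC_cend_alpha cpoly0 skew0
        cend_structure_laws)
qed

subsection \<open>Brackets of homogeneous quasicentroids\<close>

lemma QCk_comp_swap:
  assumes "D \<in> QCk_R k" and "H \<in> QCk_R s"
  shows "br (l + n + m) (D m (H n a)) ((alpha ^^ (k + s)) b)
    = br l ((alpha ^^ (k + s)) a) (H n (D m b))"
proof -
  have "br (l + n + m) (D m (H n a)) ((alpha ^^ (k + s)) b)
      = br (l + n + m) (D m (H n a)) ((alpha ^^ k) ((alpha ^^ s) b))"
    by (simp add: funpow_add)
  also have "\<dots> = br (l + n) ((alpha ^^ k) (H n a)) (D m ((alpha ^^ s) b))"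
    by (rule QCk_quasicentroid[OF assms(1)])
  also have "\<dots> = br (l + n) (H n ((alpha ^^ k) a)) ((alpha ^^ s) (D m b))"
    by (simp add: QCk_funpow_commute[OF assms(1)] QCk_funpow_commute[OF assms(2)])
  also have "\<dots> = br l ((alpha ^^ s) ((alpha ^^ k) a)) (H n (D m b))"
    by (rule QCk_quasicentroid[OF assms(2)])
  also have "\<dots> = br l ((alpha ^^ (k + s)) a) (H n (D m b))"
    by (simp add: funpow_add add.commute[of k s])
  finally show ?thesis .
qed

lemma cend_br_anti_quasicentroid:
  assumes "D \<in> QCk_R k" and "H \<in> QCk_R s"
  shows "br (l + t) (cend_br m D H t a) ((alpha ^^ (k + s)) b)
    = - br l ((alpha ^^ (k + s)) a) (cend_br m D H t b)"
proof -
  have DH: "br (l + t) (D m (H (t - m) a)) ((alpha ^^ (k + s)) b)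
      = br l ((alpha ^^ (k + s)) a) (H (t - m) (D m b))"
    using QCk_comp_swap[OF assms, of l "t - m" m a b] by simp
  have HD: "br (l + t) (H (t - m) (D m a)) ((alpha ^^ (k + s)) b)
      = br l ((alpha ^^ (k + s)) a) (D m (H (t - m) b))"
    using QCk_comp_swap[OF assms(2,1), of l m "t - m" a b] by (simp add: add.commute[of s k])
  show ?thesis
    by (simp add: cend_br_def additive.diff[OF additive_br_left] additive.diff[OF additive_br_right] DH HD)
qed

lemma cend_br_eq_0_if_QCk:
  assumes "surj alpha" and "center br = {0}"
    and "D \<in> QCk_R k" and "H \<in> QCk_R s" and "cend_br m D H \<in> QCk_R (k + s)"
  shows "cend_br m D H = 0"
proof (intro ext)
  fix t a
  have "br (l + t) (cend_br m D H t a) ((alpha ^^ (k + s)) b) = 0" for l b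
    using cend_br_anti_quasicentroid[OF assms(3,4), of l t m a b] QCk_quasicentroid[OF assms(5), of l t a b]
    by (metis eq_neg_self_imp_zero)
  moreover have "surj (alpha ^^ (k + s))"
    using assms(1) by (rule surj_fn)
  ultimately have "br l (cend_br m D H t a) c = 0" for l c
    by (metis diff_add_cancel surjD)
  then show "cend_br m D H t a = 0 t a"
    using assms(2) unfolding center_def by auto
qed

end

theorem mainTheorem13:
  fixes sc :: "complex \<Rightarrow> 'r::ab_group_add \<Rightarrow> 'r"
    and d alpha :: "'r \<Rightarrow> 'r"
    and br :: "complex \<Rightarrow> 'r \<Rightarrow> 'r \<Rightarrow> 'r"
  assumes "hom_lie_conf_on UNIV sc d alpha br"
    and "multiplicative alpha br"
    and "surj alpha"
    and "center br = {0}"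
  shows "(hom_lie_conf_on (QC sc d alpha br) (cend_sc sc) (cend_d sc) (cend_alpha alpha) cend_br
          \<and> (\<forall>k s D H m. D \<in> QCk sc d alpha br k \<longrightarrow> H \<in> QCk sc d alpha br s \<longrightarrow>
                 cend_br m D H \<in> QCk sc d alpha br (k + s)))
     \<longleftrightarrow> (\<forall>k s D H m. D \<in> QCk sc d alpha br k \<longrightarrow> H \<in> QCk sc d alpha br s \<longrightarrow>
                 cend_br m D H = 0)"
proof -
  interpret hom_bracket_module sc d alpha br
    using assms(1,2) by (rule hom_bracket_module_if_multiplicative)
  show ?thesis
    by (intro iffI conjI)
      (auto intro: cend_br_eq_0_if_QCk[OF assms(3,4)] hom_lie_conf_on_QC_if_cend_br_vanishes QCk_zero)
qed

end
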